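(* Let $D$ be a division ring with center $F$ such that $D$ is algebraic over $F$. Then $D$ has no maximal subrings if and only if $D=F$ is a field without maximal subrings.
   Context: All rings are associative unital and subrings share the identity. A maximal subring of a ring $T$ is a proper subring maximal under inclusion among proper subrings of $T$. *)

theory Defs
  imports Main
begin

definition subring :: "'a::ring_1 set \<Rightarrow> bool" where
  "subring S \<longleftrightarrow> 1 \<in> S \<and> (\<forall>x\<in>S. \<forall>y\<in>S. x + y \<in> S \<and> x - y \<in> S \<and> x * y \<in> S)"

definition maximal_subring :: "'a::ring_1 set \<Rightarrow> bool" where
  "maximal_subring S \<longleftrightarrow> subring S \<and> S \<noteq> UNIV \<and>
     (\<forall>T. subring T \<and> S \<subseteq> T \<and> T \<noteq> UNIV \<longrightarrow> T = S)"

definition center :: "'a::ring_1 set" where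
  "center = {z. \<forall>y. z * y = y * z}"

text \<open>x is algebraic over the center: it is a root of a nonzero polynomial with
  central coefficients (evaluation is well defined since coefficients are central).\<close>
definition algebraic_over_center :: "'a::ring_1 \<Rightarrow> bool" where
  "algebraic_over_center x \<longleftrightarrow>
     (\<exists>n c. (\<forall>i\<le>n. c i \<in> center) \<and> c n \<noteq> 0 \<and> (\<Sum>i\<le>n. c i * x ^ i) = 0)"

end

theory Submission
  imports Defs
begin

(* Let F be the center of D. If D <> F, pick x outside F. Its centralizer C is a proper
   subring, and D is a finitely generated left C-module; Zorn's lemma then yields a maximal
   subring containing C, because a chain of proper subrings containing C cannot exhaust D:
   a finite generating set would already lie in one member.

   Finite generation comes from the minimal polynomial p = sum c_k t^k of x over F, of degree n.
   Consider the vectors v = (v_0, ..., v_(n-1)) for which the operator d |-> sum x^i d v_i maps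
   D into a finitely generated left C-submodule. They include a nonzero one, namely the
   operator sum_k c_k sum_(i<k) x^i d x^(k-1-i), whose commutator with x telescopes to
   p(x) d - d p(x) = 0, so it takes values in C. The set is closed under right multiplication
   and under commutators v |-> v w - w v, so a vector of minimal support, scaled to have an
   entry 1, has central entries. Its operator is then d |-> k d with k = sum v_i x^i in C, and
   k <> 0 by minimality of p. Hence D = k^-1 (k D) is finitely generated over C. *)

definition centralizer :: "'a::ring_1 \<Rightarrow> 'a set" where
  "centralizer x = {k. k * x = x * k}"

lemma subring_centralizer: "subring (centralizer x)"
  unfolding subring_def centralizer_def by (auto simp: algebra_simps) (metis mult.assoc)

lemma inverse_mem_centralizer:
  "k \<in> centralizer x \<Longrightarrow> inverse k \<in> centralizer (x::'a::division_ring)"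
  unfolding centralizer_def using mult_commute_imp_mult_inverse_commute[of k x] by simp

lemma centralizer_eq_UNIV_iff: "centralizer x = UNIV \<longleftrightarrow> x \<in> center"
  unfolding centralizer_def center_def by (auto simp: set_eq_iff eq_commute)

inductive_set left_span :: "'a::ring_1 set \<Rightarrow> 'a set \<Rightarrow> 'a set" for C W where
  zero: "0 \<in> left_span C W"
| step: "c \<in> C \<Longrightarrow> w \<in> W \<Longrightarrow> y \<in> left_span C W \<Longrightarrow> c * w + y \<in> left_span C W"

lemma left_span_generator: "c \<in> C \<Longrightarrow> w \<in> W \<Longrightarrow> c * w \<in> left_span C W"
  using left_span.step[OF _ _ left_span.zero] by simp

lemma left_span_add:
  "y \<in> left_span C W \<Longrightarrow> z \<in> left_span C W \<Longrightarrow> y + z \<in> left_span C W"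
  by (induction y rule: left_span.induct) (auto simp: add.assoc intro: left_span.intros)

lemma left_span_mono: "y \<in> left_span C W \<Longrightarrow> W \<subseteq> W' \<Longrightarrow> y \<in> left_span C W'"
  by (induction y rule: left_span.induct) (auto intro: left_span.intros)

lemma left_span_mult_left:
  assumes "subring C" "a \<in> C"
  shows "y \<in> left_span C W \<Longrightarrow> a * y \<in> left_span C W"
proof (induction y rule: left_span.induct)
  case (step c w y)
  have "a * (c * w + y) = (a * c) * w + a * y"
    by (simp add: algebra_simps)
  moreover have "a * c \<in> C"
    using assms step.hyps(1) unfolding subring_def by blast
  ultimately show ?case
    using step by (auto intro: left_span.step)
qed (simp add: left_span.zero)

lemma left_span_diff:
  assumes "subring C" "y \<in> left_span C W" "z \<in> left_span C W"
  shows "y - z \<in> left_span C W"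
proof -
  have minus_one: "- 1 \<in> C"
    using assms(1) unfolding subring_def by (metis diff_0 diff_self)
  show ?thesis
    using left_span_add[OF assms(2) left_span_mult_left[OF assms(1) minus_one assms(3)]] by simp
qed

lemma left_span_mult_right:
  "y \<in> left_span C W \<Longrightarrow> y * a \<in> left_span C ((\<lambda>w. w * a) ` W)"
proof (induction y rule: left_span.induct)
  case (step c w y)
  have "(c * w + y) * a = c * (w * a) + y * a"
    by (simp add: algebra_simps)
  then show ?case
    using step by (auto intro: left_span.step)
qed (simp add: left_span.zero)

lemma left_span_subset_subring:
  assumes "subring T" "C \<subseteq> T" "W \<subseteq> T"
  shows "left_span C W \<subseteq> T"
proof
  fix y assume "y \<in> left_span C W"
  then show "y \<in> T"
  proof (induction y rule: left_span.induct)
    case zero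
    have "1 - 1 \<in> T"
      using assms(1) unfolding subring_def by blast
    then show ?case by simp
  next
    case (step c w y)
    then show ?case
      using assms unfolding subring_def by blast
  qed
qed

lemma subring_Union_chain:
  assumes "\<C> \<noteq> {}" "subset.chain {T. subring T} \<C>"
  shows "subring (\<Union>\<C>)"
proof -
  have sub: "\<forall>T\<in>\<C>. subring T" and lin: "\<forall>X\<in>\<C>. \<forall>Y\<in>\<C>. X \<subseteq> Y \<or> Y \<subseteq> X"
    using assms(2) unfolding subset.chain_def by auto
  have "a + b \<in> \<Union>\<C> \<and> a - b \<in> \<Union>\<C> \<and> a * b \<in> \<Union>\<C>" if a: "a \<in> \<Union>\<C>" and b: "b \<in> \<Union>\<C>" for a b
  proof -
    obtain X Y where "X \<in> \<C>" "Y \<in> \<C>" "a \<in> X" "b \<in> Y"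
      using a b by blast
    then obtain T where "T \<in> \<C>" "a \<in> T" "b \<in> T"
      using lin by blast
    then show ?thesis
      using sub unfolding subring_def by blast
  qed
  moreover have "1 \<in> \<Union>\<C>"
    using assms(1) sub unfolding subring_def by blast
  ultimately show ?thesis
    unfolding subring_def by blast
qed

lemma ex_maximal_subring_above:
  fixes C :: "'a::ring_1 set"
  assumes "subring C" "C \<noteq> UNIV" "finite W" "left_span C W = UNIV"
  shows "\<exists>S. maximal_subring S \<and> C \<subseteq> S"
proof -
  let ?A = "{T. subring T \<and> C \<subseteq> T \<and> T \<noteq> UNIV}"
  have nonempty: "?A \<noteq> {}"
    using assms(1,2) by blast
  have chain_Union: "\<Union>\<C> \<in> ?A" if nonempty_chain: "\<C> \<noteq> {}" and chain: "subset.chain ?A \<C>" for \<C>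
  proof -
    have members: "\<C> \<subseteq> ?A"
      using chain unfolding subset.chain_def by simp
    then have "subset.chain {T. subring T} \<C>"
      using chain unfolding subset.chain_def by auto
    then have "subring (\<Union>\<C>)"
      using subring_Union_chain nonempty_chain by blast
    moreover have "C \<subseteq> \<Union>\<C>"
      using nonempty_chain members by auto
    moreover have "\<Union>\<C> \<noteq> UNIV"
    proof
      assume "\<Union>\<C> = UNIV"
      then have "W \<subseteq> \<Union>\<C>"
        by simp
      then obtain T where "T \<in> \<C>" "W \<subseteq> T"
        by (rule finite_subset_Union_chain[OF assms(3) _ nonempty_chain chain])
      with members have "subring T" "C \<subseteq> T" "T \<noteq> UNIV"
        by auto
      then show False
        using left_span_subset_subring[of T C W] assms(4) \<open>W \<subseteq> T\<close> by auto
    qed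
    ultimately show ?thesis
      by simp
  qed
  obtain M where "M \<in> ?A" and maximal: "\<forall>T\<in>?A. M \<subseteq> T \<longrightarrow> T = M"
    using subset_Zorn_nonempty[OF nonempty chain_Union] by blast
  then have "maximal_subring M" "C \<subseteq> M"
    unfolding maximal_subring_def by auto
  then show ?thesis
    by blast
qed

lemma commutator_power_sum:
  fixes x d :: "'a::ring_1"
  shows "x * (\<Sum>i<k. x ^ i * d * x ^ (k - 1 - i)) - (\<Sum>i<k. x ^ i * d * x ^ (k - 1 - i)) * x
           = x ^ k * d - d * x ^ k"
proof -
  define f where "f i = x ^ i * d * x ^ (k - i)" for i
  have "x * (x ^ i * d * x ^ (k - 1 - i)) - x ^ i * d * x ^ (k - 1 - i) * x = f (Suc i) - f i"
    if "i < k" for i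
  proof -
    have "k - i = Suc (k - 1 - i)"
      using that by simp
    then have "x ^ (k - 1 - i) * x = x ^ (k - i)"
      by (simp only: power_Suc2)
    then show ?thesis
      unfolding f_def by (simp add: mult.assoc)
  qed
  then have "x * (\<Sum>i<k. x ^ i * d * x ^ (k - 1 - i)) - (\<Sum>i<k. x ^ i * d * x ^ (k - 1 - i)) * x
      = (\<Sum>i<k. f (Suc i) - f i)"
    by (simp only: sum_distrib_left sum_distrib_right flip: sum_subtractf) (rule sum.cong, simp_all)
  also have "\<dots> = f k - f 0"
    by (rule sum_lessThan_telescope)
  finally show ?thesis
    unfolding f_def by simp
qed

lemma center_commute: "z \<in> center \<Longrightarrow> y * z = z * y"
  unfolding center_def by simp

lemma center_left_commute: "z \<in> center \<Longrightarrow> y * (z * w) = z * (y * w)"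
  using center_commute[of z y] by (simp flip: mult.assoc)

lemma commutator_central_poly_sum:
  fixes x d :: "'a::ring_1"
  assumes c_central: "\<And>k. k \<le> n \<Longrightarrow> c k \<in> center"
  defines "S k \<equiv> \<Sum>i<k. x ^ i * d * x ^ (k - 1 - i)"
  shows "x * (\<Sum>k\<le>n. c k * S k) - (\<Sum>k\<le>n. c k * S k) * x
           = (\<Sum>k\<le>n. c k * x ^ k) * d - d * (\<Sum>k\<le>n. c k * x ^ k)"
proof -
  have "x * (c k * s) - c k * s * x = c k * (x * s - s * x)" if "k \<le> n" for k s
    using center_left_commute[OF c_central[OF that], of x s]
    by (simp add: right_diff_distrib mult.assoc)
  then have "x * (\<Sum>k\<le>n. c k * S k) - (\<Sum>k\<le>n. c k * S k) * x
      = (\<Sum>k\<le>n. c k * (x * S k - S k * x))"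
    unfolding sum_distrib_left sum_distrib_right sum_subtractf[symmetric]
    by (intro sum.cong refl) simp
  also have "\<dots> = (\<Sum>k\<le>n. c k * (x ^ k * d - d * x ^ k))"
    unfolding S_def commutator_power_sum ..
  also have "\<dots> = (\<Sum>k\<le>n. c k * x ^ k * d - d * (c k * x ^ k))"
  proof (intro sum.cong refl)
    fix k assume "k \<in> {..n}"
    then show "c k * (x ^ k * d - d * x ^ k) = c k * x ^ k * d - d * (c k * x ^ k)"
      using center_left_commute[OF c_central, of k d "x ^ k"]
      by (simp add: right_diff_distrib mult.assoc)
  qed
  also have "\<dots> = (\<Sum>k\<le>n. c k * x ^ k) * d - d * (\<Sum>k\<le>n. c k * x ^ k)"
    by (simp only: sum_distrib_left sum_distrib_right sum_subtractf)
  finally show ?thesis .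
qed

definition central_poly_root :: "'a::ring_1 \<Rightarrow> nat \<Rightarrow> (nat \<Rightarrow> 'a) \<Rightarrow> bool" where
  "central_poly_root x n c \<longleftrightarrow>
     (\<forall>i\<le>n. c i \<in> center) \<and> c n \<noteq> 0 \<and> (\<Sum>i\<le>n. c i * x ^ i) = 0"

lemma ex_minimal_central_poly_root:
  assumes "algebraic_over_center x"
  obtains n c where "central_poly_root x n c" "\<And>m c'. central_poly_root x m c' \<Longrightarrow> n \<le> m"
proof -
  obtain n0 c0 where "central_poly_root x n0 c0"
    using assms unfolding algebraic_over_center_def central_poly_root_def by blast
  then obtain nc where least: "central_poly_root x (fst nc) (snd nc)"
      "\<forall>mc. central_poly_root x (fst mc) (snd mc) \<longrightarrow> fst nc \<le> fst mc"
    using ex_has_least_nat[where P = "\<lambda>mc. central_poly_root x (fst mc) (snd mc)"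
        and m = fst and k = "(n0, c0)"]
    by auto
  show ?thesis
  proof (rule that[OF least(1)])
    fix m c' assume "central_poly_root x m c'"
    then show "fst nc \<le> m"
      using least(2) by (metis fst_conv snd_conv)
  qed
qed

context
  fixes x :: "'a::division_ring" and n :: nat and c :: "nat \<Rightarrow> 'a"
  assumes root: "central_poly_root x n c"
    and minimal: "\<And>m c'. central_poly_root x m c' \<Longrightarrow> n \<le> m"
begin

lemma degree_pos: "0 < n"
  using root unfolding central_poly_root_def by (cases n) auto

lemma central_coeffs_eq_0:
  assumes central: "\<forall>i<n. u i \<in> center" and sum_eq: "(\<Sum>i<n. u i * x ^ i) = 0"
  shows "\<forall>i<n. u i = 0"
proof -
  have "\<forall>i<m. u i = 0" if "m \<le> n" "(\<Sum>i<m. u i * x ^ i) = 0" for m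
    using that
  proof (induction m)
    case (Suc m)
    have "u m = 0"
    proof (rule ccontr)
      assume "u m \<noteq> 0"
      with Suc.prems central have "central_poly_root x m u"
        unfolding central_poly_root_def by (simp add: lessThan_Suc_atMost)
      then show False
        using minimal Suc.prems(1) by fastforce
    qed
    with Suc show ?case
      by (simp add: less_Suc_eq)
  qed simp
  then show ?thesis
    using sum_eq by blast
qed

definition elementary_op :: "(nat \<Rightarrow> 'a) \<Rightarrow> 'a \<Rightarrow> 'a" where
  "elementary_op v d = (\<Sum>i<n. x ^ i * d * v i)"

definition finitely_spanned_coeffs :: "(nat \<Rightarrow> 'a) set" where
  "finitely_spanned_coeffs =
     {v. \<exists>W. finite W \<and> range (elementary_op v) \<subseteq> left_span (centralizer x) W}"

lemma finitely_spanned_coeffs_mult_right: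
  assumes "v \<in> finitely_spanned_coeffs"
  shows "(\<lambda>i. v i * a) \<in> finitely_spanned_coeffs"
proof -
  obtain W where "finite W" and W: "range (elementary_op v) \<subseteq> left_span (centralizer x) W"
    using assms unfolding finitely_spanned_coeffs_def by blast
  have "elementary_op (\<lambda>i. v i * a) d = elementary_op v d * a" for d
    unfolding elementary_op_def by (simp add: sum_distrib_right mult.assoc)
  then have "range (elementary_op (\<lambda>i. v i * a)) \<subseteq> left_span (centralizer x) ((\<lambda>w. w * a) ` W)"
    using W left_span_mult_right by fastforce
  with \<open>finite W\<close> show ?thesis
    unfolding finitely_spanned_coeffs_def by blast
qed

lemma finitely_spanned_coeffs_commutator:
  assumes "v \<in> finitely_spanned_coeffs"
  shows "(\<lambda>i. v i * w - w * v i) \<in> finitely_spanned_coeffs"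
proof -
  obtain W where "finite W" and W: "range (elementary_op v) \<subseteq> left_span (centralizer x) W"
    using assms unfolding finitely_spanned_coeffs_def by blast
  define W' where "W' = W \<union> (\<lambda>y. y * w) ` W"
  have "elementary_op (\<lambda>i. v i * w - w * v i) d \<in> left_span (centralizer x) W'" for d
  proof -
    have "elementary_op (\<lambda>i. v i * w - w * v i) d = elementary_op v d * w - elementary_op v (d * w)"
      unfolding elementary_op_def
      by (simp add: sum_distrib_right right_diff_distrib mult.assoc flip: sum_subtractf)
    moreover have "elementary_op v (d * w) \<in> left_span (centralizer x) W'"
      using W left_span_mono[of _ _ W W'] unfolding W'_def by blast
    moreover have "elementary_op v d * w \<in> left_span (centralizer x) W'"
      using W left_span_mult_right[of "elementary_op v d" _ W w] left_span_mono[of _ _ _ W']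
      unfolding W'_def by blast
    ultimately show ?thesis
      using left_span_diff[OF subring_centralizer] by simp
  qed
  moreover have "finite W'"
    unfolding W'_def using \<open>finite W\<close> by simp
  ultimately show ?thesis
    unfolding finitely_spanned_coeffs_def by blast
qed

lemma finitely_spanned_coeffs_witness:
  "\<exists>v\<in>finitely_spanned_coeffs. v (n - 1) \<noteq> 0"
proof -
  have c_central: "c k \<in> center" if "k \<le> n" for k
    using root that unfolding central_poly_root_def by blast
  define v where "v i = (\<Sum>k\<in>{Suc i..n}. c k * x ^ (k - 1 - i))" for i
  define S where "S d k = (\<Sum>i<k. x ^ i * d * x ^ (k - 1 - i))" for d k
  have op_eq: "elementary_op v d = (\<Sum>k\<le>n. c k * S d k)" for d
  proof -
    have "elementary_op v d = (\<Sum>i<n. \<Sum>k\<in>{Suc i..n}. c k * (x ^ i * d * x ^ (k - 1 - i)))"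
      unfolding elementary_op_def v_def sum_distrib_left
      by (intro sum.cong refl center_left_commute c_central) simp
    also have "\<dots> = (\<Sum>k\<le>n. \<Sum>i<k. c k * (x ^ i * d * x ^ (k - 1 - i)))"
      by (rule sum.nested_swap'[symmetric])
    finally show ?thesis
      unfolding S_def by (simp add: sum_distrib_left)
  qed
  have "x * elementary_op v d - elementary_op v d * x = 0" for d
    using commutator_central_poly_sum[OF c_central, where x = x and d = d] root
    unfolding op_eq S_def central_poly_root_def by simp
  then have "range (elementary_op v) \<subseteq> left_span (centralizer x) {1}"
    using left_span_generator[of _ "centralizer x" 1 "{1}"] by (auto simp: centralizer_def)
  then have "v \<in> finitely_spanned_coeffs"
    unfolding finitely_spanned_coeffs_def by blast
  moreover have "v (n - 1) = c n"
    using degree_pos unfolding v_def by simp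
  ultimately show ?thesis
    using root unfolding central_poly_root_def by (intro bexI[of _ v]) auto
qed

definition support :: "(nat \<Rightarrow> 'a) \<Rightarrow> nat set" where
  "support v = {i. i < n \<and> v i \<noteq> 0}"

lemma minimal_support_coeffs_central:
  assumes "v \<in> finitely_spanned_coeffs" "i0 < n" "v i0 = 1" "i < n"
    and minimal_support: "\<And>u. u \<in> finitely_spanned_coeffs \<Longrightarrow> \<exists>j<n. u j \<noteq> 0 \<Longrightarrow>
      card (support v) \<le> card (support u)"
  shows "v i \<in> center"
proof -
  have "v i * w = w * v i" for w
  proof -
    define g where "g j = v j * w - w * v j" for j
    have "g \<in> finitely_spanned_coeffs"
      using finitely_spanned_coeffs_commutator[OF assms(1)] unfolding g_def .
    moreover have "support g \<subset> support v"
    proof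
      show "support g \<subseteq> support v"
        unfolding support_def g_def by auto
      have "i0 \<notin> support g" "i0 \<in> support v"
        using assms(2,3) unfolding support_def g_def by simp_all
      then show "support g \<noteq> support v"
        by blast
    qed
    then have "card (support g) < card (support v)"
      by (rule psubset_card_mono[rotated]) (simp add: support_def)
    ultimately have "\<not> (\<exists>j<n. g j \<noteq> 0)"
      using minimal_support[of g] by auto
    then show ?thesis
      using \<open>i < n\<close> unfolding g_def by simp
  qed
  then show ?thesis
    unfolding center_def by blast
qed

lemma ex_central_finitely_spanned_coeffs:
  "\<exists>v\<in>finitely_spanned_coeffs. (\<forall>i<n. v i \<in> center) \<and> (\<exists>i<n. v i \<noteq> 0)"
proof -
  let ?P = "\<lambda>v. v \<in> finitely_spanned_coeffs \<and> (\<exists>i<n. v i \<noteq> 0)"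
  have "n - 1 < n"
    using degree_pos by simp
  then obtain v0 where "?P v0"
    using finitely_spanned_coeffs_witness by blast
  then have "\<exists>v. ?P v \<and> (\<forall>u. ?P u \<longrightarrow> card (support v) \<le> card (support u))"
    by (rule ex_has_least_nat[where P = ?P and m = "\<lambda>v. card (support v)"])
  then obtain v where "?P v \<and> (\<forall>u. ?P u \<longrightarrow> card (support v) \<le> card (support u))" ..
  then have "?P v" and least: "\<forall>u. ?P u \<longrightarrow> card (support v) \<le> card (support u)"
    by simp_all
  then obtain i0 where "i0 < n" "v i0 \<noteq> 0"
    by blast
  define u where "u i = v i * inverse (v i0)" for i
  have "u \<in> finitely_spanned_coeffs"
    using finitely_spanned_coeffs_mult_right \<open>?P v\<close> unfolding u_def by blast
  moreover have "u i0 = 1"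
    using \<open>v i0 \<noteq> 0\<close> by (simp add: u_def)
  moreover have "support u = support v"
    using \<open>v i0 \<noteq> 0\<close> unfolding support_def u_def by simp
  ultimately have "\<forall>i<n. u i \<in> center"
    using minimal_support_coeffs_central[of u i0] \<open>i0 < n\<close> least by auto
  moreover have "\<exists>i<n. u i \<noteq> 0"
    using \<open>i0 < n\<close> \<open>u i0 = 1\<close> by auto
  ultimately show ?thesis
    using \<open>u \<in> finitely_spanned_coeffs\<close> by blast
qed

lemma centralizer_finite_left_span:
  "\<exists>W. finite W \<and> left_span (centralizer x) W = UNIV"
proof -
  obtain v where "v \<in> finitely_spanned_coeffs" and central: "\<forall>i<n. v i \<in> center"
    and nonzero: "\<exists>i<n. v i \<noteq> 0"
    using ex_central_finitely_spanned_coeffs by blast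
  then obtain W where "finite W" and W: "range (elementary_op v) \<subseteq> left_span (centralizer x) W"
    unfolding finitely_spanned_coeffs_def by blast
  define k where "k = (\<Sum>i<n. v i * x ^ i)"
  have op_eq: "elementary_op v d = k * d" for d
    unfolding elementary_op_def k_def sum_distrib_right
  proof (intro sum.cong refl)
    fix i assume "i \<in> {..<n}"
    then show "x ^ i * d * v i = v i * x ^ i * d"
      using center_commute[of "v i" "x ^ i * d"] central by (simp add: mult.assoc)
  qed
  have "k \<noteq> 0"
    using central_coeffs_eq_0[OF central] nonzero unfolding k_def by blast
  have "k \<in> centralizer x"
    unfolding centralizer_def k_def sum_distrib_left sum_distrib_right mem_Collect_eq
  proof (intro sum.cong refl)
    fix i assume "i \<in> {..<n}"
    then show "v i * x ^ i * x = x * (v i * x ^ i)"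
      using center_left_commute[of "v i" x "x ^ i"] central
      by (simp add: mult.assoc power_commutes)
  qed
  have "y \<in> left_span (centralizer x) W" for y
  proof -
    have "y = inverse k * elementary_op v y"
      using \<open>k \<noteq> 0\<close> by (simp add: op_eq flip: mult.assoc)
    also have "\<dots> \<in> left_span (centralizer x) W"
      using W left_span_mult_left[OF subring_centralizer inverse_mem_centralizer[OF \<open>k \<in> centralizer x\<close>]]
      by blast
    finally show ?thesis .
  qed
  with \<open>finite W\<close> show ?thesis
    by blast
qed

end

lemma algebraic_finite_left_span_centralizer:
  fixes x :: "'a::division_ring"
  assumes "algebraic_over_center x"
  shows "\<exists>W. finite W \<and> left_span (centralizer x) W = UNIV"
  using ex_minimal_central_poly_root[OF assms] centralizer_finite_left_span by metis

theorem corollary2p11: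
  assumes "\<forall>x::'a::division_ring. algebraic_over_center x"
  shows "(\<not> (\<exists>S::'a set. maximal_subring S)) \<longleftrightarrow>
         ((center::'a set) = UNIV \<and> \<not> (\<exists>S::'a set. maximal_subring S))"
proof
  assume no_maximal: "\<not> (\<exists>S::'a set. maximal_subring S)"
  have "(center::'a set) = UNIV"
  proof (rule ccontr)
    assume "(center::'a set) \<noteq> UNIV"
    then obtain x :: 'a where "x \<notin> center"
      by blast
    then have "centralizer x \<noteq> UNIV"
      by (simp add: centralizer_eq_UNIV_iff)
    moreover obtain W where "finite W" "left_span (centralizer x) W = UNIV"
      using algebraic_finite_left_span_centralizer assms by blast
    ultimately show False
      using ex_maximal_subring_above[OF subring_centralizer] no_maximal by blast
  qed
  with no_maximal show "(center::'a set) = UNIV \<and> \<not> (\<exists>S::'a set. maximal_subring S)"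
    by blast
qed blast

end
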